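(* Let $X$ be an infinite compact metric space and $T:X\to X$ continuous, and let $T_K$ be the induced map on the hyperspace $K(X)$. Then $(K(X),T_K)$ is exactly Devaney chaotic if and only if $(X,T)$ is topologically exact and is an HY-system.
   Context: $K(X)$ is the space of non-empty closed subsets of $X$ with the Hausdorff metric $d_H(A,B)=\max\{\max_{x\in A}\min_{y\in B}d(x,y),\ \max_{y\in B}\min_{x\in A}d(x,y)\}$, and $T_K(C)=TC$. A dynamical system $(Y,S)$ (compact metric $Y$, continuous $S$) is topologically exact if for every non-empty open $U\subset Y$ there is $n\in\mathbb{N}$ with $S^nU=Y$; it is exactly Devaney chaotic if it is topologically exact and its periodic points (points $y$ with $S^ny=y$ for some $n\in\mathbb{N}$) are dense. $(Y,S)$ is transitive if for any non-empty open $U,V$ there is $n\in\mathbb{N}$ with $S^nU\cap V\ne\emptyset$; totally transitive if $(Y,S^n)$ is transitive for all $n\in\mathbb{N}$. $(Y,S)$ has dense small periodic sets if for every non-empty open $U\subset Y$ there exist a non-empty closed $Z\subset U$ and $k\in\mathbb{N}$ with $S^kZ\subset Z$. An HY-system is a totally transitive system with dense small periodic sets. *)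

theory Defs
  imports "HOL-Analysis.Analysis"
begin

definition mopen :: "('b \<Rightarrow> 'b \<Rightarrow> real) \<Rightarrow> 'b set \<Rightarrow> 'b set \<Rightarrow> bool" where
  "mopen d Y U \<longleftrightarrow> U \<subseteq> Y \<and> (\<forall>x\<in>U. \<exists>e>0. \<forall>y\<in>Y. d x y < e \<longrightarrow> y \<in> U)"

definition mclosed :: "('b \<Rightarrow> 'b \<Rightarrow> real) \<Rightarrow> 'b set \<Rightarrow> 'b set \<Rightarrow> bool" where
  "mclosed d Y Z \<longleftrightarrow> Z \<subseteq> Y \<and> mopen d Y (Y - Z)"

definition topologically_exact :: "('b \<Rightarrow> 'b \<Rightarrow> real) \<Rightarrow> 'b set \<Rightarrow> ('b \<Rightarrow> 'b) \<Rightarrow> bool" where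
  "topologically_exact d Y S \<longleftrightarrow>
     (\<forall>U. mopen d Y U \<and> U \<noteq> {} \<longrightarrow> (\<exists>n\<ge>1. (S ^^ n) ` U = Y))"

definition periodic_point :: "'b set \<Rightarrow> ('b \<Rightarrow> 'b) \<Rightarrow> 'b \<Rightarrow> bool" where
  "periodic_point Y S y \<longleftrightarrow> y \<in> Y \<and> (\<exists>n\<ge>1. (S ^^ n) y = y)"

definition exactly_devaney_chaotic :: "('b \<Rightarrow> 'b \<Rightarrow> real) \<Rightarrow> 'b set \<Rightarrow> ('b \<Rightarrow> 'b) \<Rightarrow> bool" where
  "exactly_devaney_chaotic d Y S \<longleftrightarrow> topologically_exact d Y S \<and>
     (\<forall>U. mopen d Y U \<and> U \<noteq> {} \<longrightarrow> (\<exists>y\<in>U. periodic_point Y S y))"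

definition transitive_sys :: "('b \<Rightarrow> 'b \<Rightarrow> real) \<Rightarrow> 'b set \<Rightarrow> ('b \<Rightarrow> 'b) \<Rightarrow> bool" where
  "transitive_sys d Y S \<longleftrightarrow>
     (\<forall>U V. mopen d Y U \<and> U \<noteq> {} \<and> mopen d Y V \<and> V \<noteq> {} \<longrightarrow>
        (\<exists>n\<ge>1. (S ^^ n) ` U \<inter> V \<noteq> {}))"

definition totally_transitive :: "('b \<Rightarrow> 'b \<Rightarrow> real) \<Rightarrow> 'b set \<Rightarrow> ('b \<Rightarrow> 'b) \<Rightarrow> bool" where
  "totally_transitive d Y S \<longleftrightarrow> (\<forall>n\<ge>1. transitive_sys d Y (S ^^ n))"

definition dense_small_periodic_sets :: "('b \<Rightarrow> 'b \<Rightarrow> real) \<Rightarrow> 'b set \<Rightarrow> ('b \<Rightarrow> 'b) \<Rightarrow> bool" where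
  "dense_small_periodic_sets d Y S \<longleftrightarrow>
     (\<forall>U. mopen d Y U \<and> U \<noteq> {} \<longrightarrow>
        (\<exists>Z k. mclosed d Y Z \<and> Z \<noteq> {} \<and> Z \<subseteq> U \<and> k \<ge> 1 \<and> (S ^^ k) ` Z \<subseteq> Z))"

definition HY_system :: "('b \<Rightarrow> 'b \<Rightarrow> real) \<Rightarrow> 'b set \<Rightarrow> ('b \<Rightarrow> 'b) \<Rightarrow> bool" where
  "HY_system d Y S \<longleftrightarrow> totally_transitive d Y S \<and> dense_small_periodic_sets d Y S"

text \<open>Hyperspace K(X) of nonempty closed subsets of X, with the Hausdorff metric
  (max/min written as Sup/Inf, which coincide on nonempty compact sets).\<close>

definition hyperspace :: "'a::metric_space set \<Rightarrow> 'a set set" where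
  "hyperspace X = {C. C \<subseteq> X \<and> C \<noteq> {} \<and> closed C}"

definition hausdorff_dist :: "'a::metric_space set \<Rightarrow> 'a set \<Rightarrow> real" where
  "hausdorff_dist A B = max (SUP x\<in>A. INF y\<in>B. dist x y) (SUP y\<in>B. INF x\<in>A. dist x y)"

definition induced_map :: "('a \<Rightarrow> 'a) \<Rightarrow> 'a set \<Rightarrow> 'a set" where
  "induced_map T C = T ` C"

end

theory Submission
  imports Defs
begin

text \<open>For open U in X the closed sets C \<subseteq> U form an open subset of K(X) containing the
  singletons, so exactness and dense periodic points of T_K descend to X as exactness and
  dense small periodic sets; exactness alone gives total transitivity. Conversely, a
  non-empty open subset of K(X) contains every closed union D_1 \<union> ... \<union> D_n of non-empty
  sets D_i lying in small balls around the points a_i of a finite net. Exactness with a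
  common time N allows D_i = T^-N(C) near a_i, so T_K^N maps the open set onto K(X). From
  small closed sets Z_i with T^(k_i) Z_i \<subseteq> Z_i one passes to the common period K and to the
  eventual images D_i = \<Inter>_m T^(mK) Z_i; compactness gives T^K D_i = D_i, so the union of
  the D_i is a periodic point of T_K.\<close>

lemma mopen_dist_iff_openin: "mopen dist X U \<longleftrightarrow> openin (top_of_set X) U"
  unfolding mopen_def openin_euclidean_subtopology_iff by (simp add: dist_commute)

lemma mclosed_dist_iff_closedin: "mclosed dist X Z \<longleftrightarrow> closedin (top_of_set X) Z"
  by (simp add: mclosed_def closedin_def mopen_dist_iff_openin)

lemma openin_ball_Int_nonempty:
  assumes "a \<in> X" "r > 0"
  shows "openin (top_of_set X) (ball a r \<inter> X)" "ball a r \<inter> X \<noteq> {}"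
  using assms by (simp_all add: Int_commute openin_open_Int) force

lemma compact_if_mem_hyperspace: "compact X \<Longrightarrow> C \<in> hyperspace X \<Longrightarrow> compact C"
  unfolding hyperspace_def by (metis compact_Int_closed inf.absorb_iff2 mem_Collect_eq)

lemma bdd_below_image_dist_left: "bdd_below ((\<lambda>x. dist x y) ` A)"
  by (rule bdd_belowI2[of _ 0]) simp

lemma hausdorff_dist_le:
  assumes "C \<noteq> {}" "D \<noteq> {}"
    and "\<And>y. y \<in> D \<Longrightarrow> \<exists>x\<in>C. dist x y \<le> r" "\<And>x. x \<in> C \<Longrightarrow> \<exists>y\<in>D. dist x y \<le> r"
  shows "hausdorff_dist C D \<le> r"
proof -
  have "(SUP y\<in>D. INF x\<in>C. dist x y) \<le> r"
  proof (rule cSUP_least[OF assms(2)])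
    fix y assume "y \<in> D"
    then obtain x where "x \<in> C" "dist x y \<le> r" using assms(3) by blast
    then show "(INF x\<in>C. dist x y) \<le> r"
      using cINF_lower[OF bdd_below_image_dist_left] by (metis order_trans)
  qed
  moreover have "(SUP x\<in>C. INF y\<in>D. dist x y) \<le> r"
  proof (rule cSUP_least[OF assms(1)])
    fix x assume "x \<in> C"
    then obtain y where "y \<in> D" "dist x y \<le> r" using assms(4) by blast
    then show "(INF y\<in>D. dist x y) \<le> r"
      using cINF_lower[OF bdd_below_image_dist] by (metis order_trans)
  qed
  ultimately show ?thesis unfolding hausdorff_dist_def by simp
qed

lemma hausdorff_dist_lt_imp_near:
  assumes "bounded D" "C \<noteq> {}" "y \<in> D" "hausdorff_dist C D < e"
  obtains x where "x \<in> C" "dist x y < e"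
proof -
  obtain x0 where x0: "x0 \<in> C" using assms(2) by blast
  obtain b where b: "\<forall>y\<in>D. dist x0 y \<le> b" using assms(1) bounded_any_center by blast
  have "bdd_above ((\<lambda>y. INF x\<in>C. dist x y) ` D)"
  proof (rule bdd_aboveI2[of _ _ b])
    fix y assume "y \<in> D"
    have "(INF x\<in>C. dist x y) \<le> dist x0 y"
      by (rule cINF_lower[OF bdd_below_image_dist_left x0])
    then show "(INF x\<in>C. dist x y) \<le> b" using b \<open>y \<in> D\<close> by force
  qed
  then have "(INF x\<in>C. dist x y) \<le> (SUP y\<in>D. INF x\<in>C. dist x y)"
    using assms(3) by (rule cSUP_upper2) simp
  then have "(INF x\<in>C. dist x y) < e"
    using assms(4) unfolding hausdorff_dist_def by linarith
  then show ?thesis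
    using that cINF_less_iff[OF assms(2) bdd_below_image_dist_left] by blast
qed

lemma hausdorff_dist_le_net:
  assumes "A \<noteq> {}" "F \<subseteq> A" "A \<subseteq> (\<Union>a\<in>F. ball a r)" "D \<subseteq> (\<Union>a\<in>F. ball a r)"
    and "\<And>a. a \<in> F \<Longrightarrow> D \<inter> ball a r \<noteq> {}"
  shows "hausdorff_dist A D \<le> 2 * r"
proof (rule hausdorff_dist_le)
  show "D \<noteq> {}" using assms(1,3,5) by blast
next
  fix y assume "y \<in> D"
  then obtain a where "a \<in> F" "dist a y < r" using assms(4) by auto
  moreover have "dist a y \<le> 2 * r" using \<open>dist a y < r\<close> zero_le_dist[of a y] by linarith
  ultimately show "\<exists>x\<in>A. dist x y \<le> 2 * r" using assms(2) by blast
next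
  fix x assume "x \<in> A"
  then obtain a where a: "a \<in> F" "dist a x < r" using assms(3) by auto
  obtain y where y: "y \<in> D" "dist a y < r" using assms(5)[OF a(1)] by (auto simp: mem_ball)
  have "dist x y \<le> dist a x + dist a y" by (rule dist_triangle3)
  then have "dist x y \<le> 2 * r" using a(2) y(2) by linarith
  then show "\<exists>y\<in>D. dist x y \<le> 2 * r" using y(1) by blast
qed (use assms(1) in simp)

lemma mopen_hyperspace_subsets:
  assumes "compact X" "openin (top_of_set X) U"
  shows "mopen hausdorff_dist (hyperspace X) {C \<in> hyperspace X. C \<subseteq> U}"
  unfolding mopen_def
proof (intro conjI ballI)
  fix C assume C: "C \<in> {C \<in> hyperspace X. C \<subseteq> U}"
  obtain V where V: "open V" "U = X \<inter> V" using assms(2) by (auto simp: openin_open)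
  have "compact C" "C \<subseteq> \<Union>{V}" using C V compact_if_mem_hyperspace[OF assms(1)] by auto
  then obtain e where e: "e > 0" "\<And>x. x \<in> C \<Longrightarrow> \<exists>G\<in>{V}. ball x e \<subseteq> G"
  proof (rule Heine_Borel_lemma)
    show "\<And>G. G \<in> {V} \<Longrightarrow> open G" using V(1) by blast
  qed (rule that)
  show "\<exists>e>0. \<forall>D\<in>hyperspace X. hausdorff_dist C D < e \<longrightarrow> D \<in> {C \<in> hyperspace X. C \<subseteq> U}"
  proof (intro exI[of _ e] conjI ballI impI)
    fix D assume D: "D \<in> hyperspace X" "hausdorff_dist C D < e"
    have "y \<in> V" if y: "y \<in> D" for y
    proof -
      have "bounded D" using D(1) assms(1) compact_if_mem_hyperspace compact_imp_bounded by blast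
      moreover have "C \<noteq> {}" using C by (simp add: hyperspace_def)
      ultimately obtain x where "x \<in> C" "dist x y < e"
        using y D(2) by (rule hausdorff_dist_lt_imp_near)
      then show "y \<in> V" using e(2) by fastforce
    qed
    then show "D \<in> {C \<in> hyperspace X. C \<subseteq> U}" using D(1) V(2) by (auto simp: hyperspace_def)
  qed (use e in simp)
qed auto

lemma hyperspace_subsets_nonempty:
  assumes "openin (top_of_set X) U" "U \<noteq> {}"
  shows "{C \<in> hyperspace X. C \<subseteq> U} \<noteq> {}"
proof -
  obtain x where "x \<in> U" using assms(2) by blast
  then have "{x} \<in> {C \<in> hyperspace X. C \<subseteq> U}"
    using openin_imp_subset[OF assms(1)] by (auto simp: hyperspace_def)
  then show ?thesis by blast
qed

lemma mopen_hyperspace_contains_unions: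
  assumes "compact X" "mopen hausdorff_dist (hyperspace X) \<U>" "\<U> \<noteq> {}"
  obtains F r where "finite F" "F \<noteq> {}" "F \<subseteq> X" "r > 0"
    "\<And>D. (\<And>a. a \<in> F \<Longrightarrow> D a \<noteq> {} \<and> closed (D a) \<and> D a \<subseteq> ball a r \<inter> X)
      \<Longrightarrow> (\<Union>a\<in>F. D a) \<in> \<U>"
proof -
  obtain A e where A: "A \<in> hyperspace X" "e > 0"
    and near_A: "\<And>D. D \<in> hyperspace X \<Longrightarrow> hausdorff_dist A D < e \<Longrightarrow> D \<in> \<U>"
    using assms(2,3) unfolding mopen_def by blast
  have cA: "compact A" "A \<noteq> {}" "A \<subseteq> X"
    using A(1) compact_if_mem_hyperspace[OF assms(1)] by (auto simp: hyperspace_def)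
  have "A \<subseteq> (\<Union>a\<in>A. ball a (e/3))" using A(2) by auto
  then obtain F where F: "F \<subseteq> A" "finite F" "A \<subseteq> (\<Union>a\<in>F. ball a (e/3))"
    by (rule compactE_image[OF cA(1) open_ball])
  have "F \<noteq> {}" using F(3) cA(2) by auto
  have union_in: "(\<Union>a\<in>F. D a) \<in> \<U>"
    if D: "\<And>a. a \<in> F \<Longrightarrow> D a \<noteq> {} \<and> closed (D a) \<and> D a \<subseteq> ball a (e/3) \<inter> X" for D
  proof (rule near_A)
    have "closed (\<Union>a\<in>F. D a)" using D F(2) by (simp add: closed_UN)
    moreover have "(\<Union>a\<in>F. D a) \<subseteq> (\<Union>a\<in>F. ball a (e/3))" "(\<Union>a\<in>F. D a) \<subseteq> X"
      using D by blast+
    moreover have "(\<Union>a\<in>F. D a) \<inter> ball a (e/3) \<noteq> {}" if "a \<in> F" for a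
      using D[OF that] that by blast
    moreover have "(\<Union>a\<in>F. D a) \<noteq> {}" using D \<open>F \<noteq> {}\<close> by blast
    ultimately show "(\<Union>a\<in>F. D a) \<in> hyperspace X"
      and "hausdorff_dist A (\<Union>a\<in>F. D a) < e"
      using hausdorff_dist_le_net[OF cA(2) F(1,3), of "\<Union>a\<in>F. D a"] A(2)
      by (simp_all add: hyperspace_def)
  qed
  have "F \<subseteq> X" "e/3 > 0" using F(1) cA(3) A(2) by auto
  with F(2) \<open>F \<noteq> {}\<close> show ?thesis using union_in by (rule that)
qed

lemma induced_map_funpow: "(induced_map T ^^ n) C = (T ^^ n) ` C"
  by (induction n) (auto simp: induced_map_def image_comp)

lemma funpow_image_subset: "T ` X \<subseteq> X \<Longrightarrow> (T ^^ n) ` X \<subseteq> X"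
  by (induction n) (auto simp: image_subset_iff)

lemma funpow_image_antimono:
  assumes "T ` X \<subseteq> X" "m \<le> n"
  shows "(T ^^ n) ` X \<subseteq> (T ^^ m) ` X"
proof -
  have "(T ^^ n) ` X = (T ^^ m) ` ((T ^^ (n - m)) ` X)"
    using assms(2) by (simp add: image_comp flip: funpow_add)
  then show ?thesis using funpow_image_subset[OF assms(1)] by blast
qed

lemma continuous_on_funpow:
  assumes "continuous_on X T" "T ` X \<subseteq> X"
  shows "continuous_on X (T ^^ n)"
proof (induction n)
  case (Suc n)
  then show ?case
    using continuous_on_compose[OF Suc continuous_on_subset[OF assms(1)]]
      funpow_image_subset[OF assms(2)] by simp
qed simp

lemma image_funpow_in_hyperspace:
  assumes "compact X" "continuous_on X T" "T ` X \<subseteq> X" "C \<in> hyperspace X"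
  shows "(T ^^ n) ` C \<in> hyperspace X"
proof -
  have "C \<subseteq> X" "C \<noteq> {}" using assms(4) by (auto simp: hyperspace_def)
  then have "compact ((T ^^ n) ` C)"
    using compact_continuous_image compact_if_mem_hyperspace assms
      continuous_on_subset[OF continuous_on_funpow] by metis
  then show ?thesis
    using \<open>C \<subseteq> X\<close> \<open>C \<noteq> {}\<close> funpow_image_subset[OF assms(3), of n]
    by (auto simp: hyperspace_def compact_imp_closed)
qed

lemma decreasing_closed_Inter_nonempty:
  fixes K :: "nat \<Rightarrow> 'a::topological_space set"
  assumes "compact Z" "\<And>n. closed (K n)" "\<And>n. K n \<noteq> {}" "\<And>n. K n \<subseteq> Z" "decseq K"
  shows "(\<Inter>n. K n) \<noteq> {}"
proof -
  have "Z \<inter> (\<Inter>n\<in>UNIV. K n) \<noteq> {}"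
  proof (rule compact_imp_fip_image[OF assms(1,2)])
    fix I :: "nat set" assume "finite I"
    then have "i \<le> Max (insert 0 I)" if "i \<in> I" for i
      using that by simp
    then have "K (Max (insert 0 I)) \<subseteq> Z \<inter> (\<Inter>i\<in>I. K i)"
      using assms(4) decseqD[OF assms(5)] by blast
    then show "Z \<inter> (\<Inter>i\<in>I. K i) \<noteq> {}" using assms(3) by blast
  qed
  then show ?thesis by blast
qed

text \<open>The eventual image \<Inter>_m S^m Z of a compact forward invariant set is mapped onto itself.\<close>

lemma compact_forward_invariant_contains_invariant:
  fixes S :: "'a::t2_space \<Rightarrow> 'a"
  assumes "compact Z" "Z \<noteq> {}" "continuous_on Z S" "S ` Z \<subseteq> Z"
  obtains W where "W \<subseteq> Z" "W \<noteq> {}" "compact W" "S ` W = W"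
proof -
  define W where "W = (\<Inter>m. (S ^^ m) ` Z)"
  have iterate_closed: "closed ((S ^^ m) ` Z)" for m
  proof -
    have "compact ((S ^^ m) ` Z)"
      by (rule compact_continuous_image[OF continuous_on_funpow[OF assms(3,4)] assms(1)])
    then show ?thesis by (rule compact_imp_closed)
  qed
  have iterate_subset: "(S ^^ m) ` Z \<subseteq> Z" for m
    by (rule funpow_image_subset[OF assms(4)])
  have iterates_decseq: "decseq (\<lambda>m. (S ^^ m) ` Z)"
    using funpow_image_antimono[OF assms(4)] by (auto simp: decseq_def)
  have image_Suc: "(S ^^ Suc m) ` Z = S ` ((S ^^ m) ` Z)" for m
    by (simp add: image_comp)
  have "W \<subseteq> (S ^^ 0) ` Z" unfolding W_def by blast
  then have "W \<subseteq> Z" by simp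
  moreover have "W \<noteq> {}" unfolding W_def
    using assms(2) iterate_closed iterate_subset iterates_decseq
    by (intro decreasing_closed_Inter_nonempty[OF assms(1)]) auto
  moreover have "compact W"
  proof -
    have "closed W" unfolding W_def using iterate_closed by blast
    moreover have "Z \<inter> W = W" using \<open>W \<subseteq> Z\<close> by blast
    ultimately show ?thesis using compact_Int_closed[OF assms(1)] by metis
  qed
  moreover have "S ` W = W"
  proof
    show "S ` W \<subseteq> W"
    proof
      fix y assume "y \<in> S ` W"
      then have "y \<in> S ` ((S ^^ m) ` Z)" for m unfolding W_def by blast
      then have "y \<in> (S ^^ m) ` Z" for m
        using funpow_image_antimono[OF assms(4), of m "Suc m"] image_Suc[of m] by auto
      then show "y \<in> W" unfolding W_def by blast
    qed
  next
    show "W \<subseteq> S ` W"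
    proof
      fix y assume y: "y \<in> W"
      have fibre_closed: "closed (Z \<inter> S -` {y})"
        using continuous_closed_preimage[OF assms(3) compact_imp_closed[OF assms(1)]] by simp
      have "y \<in> S ` ((S ^^ m) ` Z)" for m
        using y image_Suc[of m] unfolding W_def by blast
      then have "(S ^^ m) ` Z \<inter> (Z \<inter> S -` {y}) \<noteq> {}" for m
        using iterate_subset by blast
      moreover have "decseq (\<lambda>m. (S ^^ m) ` Z \<inter> (Z \<inter> S -` {y}))"
        unfolding decseq_def using decseqD[OF iterates_decseq] by blast
      ultimately have "(\<Inter>m. (S ^^ m) ` Z \<inter> (Z \<inter> S -` {y})) \<noteq> {}"
        using iterate_closed fibre_closed iterate_subset
        by (intro decreasing_closed_Inter_nonempty[OF assms(1)]) auto
      then show "y \<in> S ` W" unfolding W_def by blast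
    qed
  qed
  ultimately show ?thesis using that by blast
qed

lemma topologically_exact_funpow_image_eq:
  assumes "topologically_exact dist X T" "T ` X \<subseteq> X" "X \<noteq> {}"
  shows "(T ^^ m) ` X = X"
proof -
  have "openin (top_of_set X) X" by simp
  then obtain n where n: "n \<ge> 1" "(T ^^ n) ` X = X"
    using assms(1,3) unfolding topologically_exact_def mopen_dist_iff_openin by blast
  obtain k where "n = Suc k" using n(1) by (cases n) auto
  then have "X = T ` ((T ^^ k) ` X)" using n(2) by (simp add: image_comp)
  then have onto: "T ` X = X"
    using funpow_image_subset[OF assms(2)] assms(2) by blast
  show ?thesis
  proof (induction m)
    case (Suc m)
    have "(T ^^ Suc m) ` X = T ` ((T ^^ m) ` X)" by (simp add: image_comp)
    then show ?case using Suc onto by simp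
  qed simp
qed

lemma topologically_exact_funpow_image_eq_mono:
  assumes "topologically_exact dist X T" "T ` X \<subseteq> X" "X \<noteq> {}"
    and "(T ^^ n) ` U = X" "n \<le> m"
  shows "(T ^^ m) ` U = X"
proof -
  have "(T ^^ m) ` U = (T ^^ (m - n)) ` ((T ^^ n) ` U)"
    using assms(5) by (simp add: image_comp flip: funpow_add)
  then show ?thesis using assms(4) topologically_exact_funpow_image_eq[OF assms(1-3)] by simp
qed

lemma topologically_exact_common_time:
  assumes "topologically_exact dist X T" "T ` X \<subseteq> X" "X \<noteq> {}" "finite I"
    and "\<And>i. i \<in> I \<Longrightarrow> openin (top_of_set X) (U i) \<and> U i \<noteq> {}"
  shows "\<exists>N\<ge>1. \<forall>i\<in>I. (T ^^ N) ` U i = X"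
proof -
  have "\<forall>i\<in>I. \<exists>n. (T ^^ n) ` U i = X"
  proof
    fix i assume "i \<in> I"
    then have "mopen dist X (U i) \<and> U i \<noteq> {}"
      using assms(5) by (simp add: mopen_dist_iff_openin)
    then show "\<exists>n. (T ^^ n) ` U i = X"
      using assms(1) unfolding topologically_exact_def by blast
  qed
  from bchoice[OF this] obtain n where n: "\<forall>i\<in>I. (T ^^ n i) ` U i = X" ..
  show ?thesis
  proof (intro exI[of _ "Max (insert 1 (n ` I))"] conjI ballI)
    fix i assume i: "i \<in> I"
    have "n i \<le> Max (insert 1 (n ` I))" using assms(4) i by simp
    then show "(T ^^ Max (insert 1 (n ` I))) ` U i = X"
      by (rule topologically_exact_funpow_image_eq_mono[OF assms(1-3) bspec[OF n i]])
  qed (use assms(4) in simp)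
qed

lemma topologically_exact_imp_totally_transitive:
  assumes "topologically_exact dist X T" "T ` X \<subseteq> X" "X \<noteq> {}"
  shows "totally_transitive dist X T"
  unfolding totally_transitive_def transitive_sys_def
proof (intro allI impI)
  fix n :: nat and U V
  assume n: "n \<ge> 1" and UV: "mopen dist X U \<and> U \<noteq> {} \<and> mopen dist X V \<and> V \<noteq> {}"
  obtain m where m: "m \<ge> 1" "(T ^^ m) ` U = X"
    using assms(1) UV unfolding topologically_exact_def by blast
  have "((T ^^ n) ^^ m) ` U = X"
    using topologically_exact_funpow_image_eq_mono[OF assms m(2), of "n * m"] n by (simp add: funpow_mult)
  moreover have "V \<subseteq> X" "V \<noteq> {}" using UV by (auto simp: mopen_def)
  ultimately show "\<exists>k\<ge>1. ((T ^^ n) ^^ k) ` U \<inter> V \<noteq> {}" using m(1) by auto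
qed

lemma topologically_exact_of_hyperspace:
  assumes "compact X" "T ` X \<subseteq> X"
    and "topologically_exact hausdorff_dist (hyperspace X) (induced_map T)"
  shows "topologically_exact dist X T"
  unfolding topologically_exact_def mopen_dist_iff_openin
proof (intro allI impI)
  fix U assume U: "openin (top_of_set X) U \<and> U \<noteq> {}"
  then have "mopen hausdorff_dist (hyperspace X) {C \<in> hyperspace X. C \<subseteq> U}"
    "{C \<in> hyperspace X. C \<subseteq> U} \<noteq> {}"
    using mopen_hyperspace_subsets[OF assms(1)] hyperspace_subsets_nonempty by blast+
  then obtain n where n: "n \<ge> 1"
    "(induced_map T ^^ n) ` {C \<in> hyperspace X. C \<subseteq> U} = hyperspace X"
    using assms(3) unfolding topologically_exact_def by blast
  have "X \<in> hyperspace X"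
    using U openin_imp_subset assms(1) by (auto simp: hyperspace_def compact_imp_closed)
  then have "X \<in> (induced_map T ^^ n) ` {C \<in> hyperspace X. C \<subseteq> U}" by (simp only: n(2))
  then obtain C where C: "C \<subseteq> U" "(induced_map T ^^ n) C = X" by auto
  have "U \<subseteq> X" using U openin_imp_subset by blast
  then have "(T ^^ n) ` U \<subseteq> X" using funpow_image_subset[OF assms(2), of n] by blast
  moreover have "X \<subseteq> (T ^^ n) ` U" using C by (auto simp: induced_map_funpow)
  ultimately have "(T ^^ n) ` U = X" by blast
  then show "\<exists>n\<ge>1. (T ^^ n) ` U = X" using n(1) by blast
qed

lemma dense_small_periodic_sets_of_hyperspace:
  assumes "compact X"
    and "\<forall>\<U>. mopen hausdorff_dist (hyperspace X) \<U> \<and> \<U> \<noteq> {} \<longrightarrow>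
           (\<exists>C\<in>\<U>. periodic_point (hyperspace X) (induced_map T) C)"
  shows "dense_small_periodic_sets dist X T"
  unfolding dense_small_periodic_sets_def mopen_dist_iff_openin mclosed_dist_iff_closedin
proof (intro allI impI)
  fix U assume U: "openin (top_of_set X) U \<and> U \<noteq> {}"
  then have "mopen hausdorff_dist (hyperspace X) {C \<in> hyperspace X. C \<subseteq> U}
      \<and> {C \<in> hyperspace X. C \<subseteq> U} \<noteq> {}"
    using mopen_hyperspace_subsets[OF assms(1)] hyperspace_subsets_nonempty by blast
  then obtain C where C: "C \<in> hyperspace X" "C \<subseteq> U"
    and periodic: "periodic_point (hyperspace X) (induced_map T) C"
    using assms(2)[rule_format] by blast
  from periodic obtain k where k: "k \<ge> 1" "(T ^^ k) ` C = C"
    unfolding periodic_point_def induced_map_funpow by blast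
  moreover have "closedin (top_of_set X) C" "C \<noteq> {}"
    using C(1) by (auto simp: hyperspace_def intro: closed_subset)
  ultimately show "\<exists>Z k. closedin (top_of_set X) Z \<and> Z \<noteq> {} \<and> Z \<subseteq> U \<and> k \<ge> 1 \<and> (T ^^ k) ` Z \<subseteq> Z"
    using C(2) by (intro exI[of _ C] exI[of _ k]) simp
qed

lemma topologically_exact_hyperspace:
  assumes "compact X" "continuous_on X T" "T ` X \<subseteq> X" "topologically_exact dist X T"
  shows "topologically_exact hausdorff_dist (hyperspace X) (induced_map T)"
  unfolding topologically_exact_def
proof (intro allI impI)
  fix \<U> assume \<U>: "mopen hausdorff_dist (hyperspace X) \<U> \<and> \<U> \<noteq> {}"
  obtain F r where F: "finite F" "F \<noteq> {}" "F \<subseteq> X" "r > 0"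
    and union_in: "\<And>D. (\<And>a. a \<in> F \<Longrightarrow> D a \<noteq> {} \<and> closed (D a) \<and> D a \<subseteq> ball a r \<inter> X)
      \<Longrightarrow> (\<Union>a\<in>F. D a) \<in> \<U>"
    by (fact mopen_hyperspace_contains_unions[OF assms(1) conjunct1[OF \<U>] conjunct2[OF \<U>]])
  have "X \<noteq> {}" using F(2,3) by blast
  have balls: "openin (top_of_set X) (ball a (r/2) \<inter> X) \<and> ball a (r/2) \<inter> X \<noteq> {}"
    if "a \<in> F" for a
    using openin_ball_Int_nonempty[of a X "r/2"] F(3,4) that by auto
  obtain N where N: "N \<ge> 1" "\<And>a. a \<in> F \<Longrightarrow> (T ^^ N) ` (ball a (r/2) \<inter> X) = X"
    using topologically_exact_common_time[where U="\<lambda>a. ball a (r/2) \<inter> X", OF assms(4,3) \<open>X \<noteq> {}\<close> F(1) balls]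
    by blast
  have "hyperspace X \<subseteq> (induced_map T ^^ N) ` \<U>"
  proof
    fix C assume C: "C \<in> hyperspace X"
    define D where "D a = cball a (r/2) \<inter> (X \<inter> (T ^^ N) -` C)" for a
    have image_D: "(T ^^ N) ` D a = C" if "a \<in> F" for a
    proof
      show "(T ^^ N) ` D a \<subseteq> C" by (auto simp: D_def)
      have "C \<subseteq> (T ^^ N) ` (ball a (r/2) \<inter> X)" using N(2)[OF that] C by (simp add: hyperspace_def)
      then show "C \<subseteq> (T ^^ N) ` D a" by (auto simp: D_def)
    qed
    have "closed (D a)" for a
      using continuous_closed_preimage[OF continuous_on_funpow[OF assms(2,3)]] assms(1) C
      by (auto simp: D_def hyperspace_def compact_imp_closed)
    moreover have "D a \<subseteq> ball a r \<inter> X" for a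
      using F(4) by (auto simp: D_def)
    moreover have "D a \<noteq> {}" if "a \<in> F" for a
      using image_D[OF that] C by (auto simp: hyperspace_def)
    ultimately have "(\<Union>a\<in>F. D a) \<in> \<U>"
      by (intro union_in) blast
    moreover have "(induced_map T ^^ N) (\<Union>a\<in>F. D a) = C"
      using image_D F(2) by (simp add: induced_map_funpow image_UN)
    ultimately show "C \<in> (induced_map T ^^ N) ` \<U>" by (metis image_eqI)
  qed
  moreover have "(induced_map T ^^ N) ` \<U> \<subseteq> hyperspace X"
    using \<U> image_funpow_in_hyperspace[OF assms(1-3)] by (auto simp: mopen_def induced_map_funpow)
  ultimately show "\<exists>n\<ge>1. (induced_map T ^^ n) ` \<U> = hyperspace X" using N(1) by blast
qed

lemma periodic_points_dense_hyperspace: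
  assumes "compact X" "continuous_on X T" "T ` X \<subseteq> X" "dense_small_periodic_sets dist X T"
    and "mopen hausdorff_dist (hyperspace X) \<U>" "\<U> \<noteq> {}"
  shows "\<exists>D\<in>\<U>. periodic_point (hyperspace X) (induced_map T) D"
proof -
  obtain F r where F: "finite F" "F \<noteq> {}" "F \<subseteq> X" "r > 0"
    and union_in: "\<And>D. (\<And>a. a \<in> F \<Longrightarrow> D a \<noteq> {} \<and> closed (D a) \<and> D a \<subseteq> ball a r \<inter> X)
      \<Longrightarrow> (\<Union>a\<in>F. D a) \<in> \<U>"
    by (fact mopen_hyperspace_contains_unions[OF assms(1,5,6)])
  have small: "\<forall>U. openin (top_of_set X) U \<and> U \<noteq> {} \<longrightarrow>
      (\<exists>Z k. closedin (top_of_set X) Z \<and> Z \<noteq> {} \<and> Z \<subseteq> U \<and> k \<ge> 1 \<and> (T ^^ k) ` Z \<subseteq> Z)"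
    using assms(4)
    unfolding dense_small_periodic_sets_def mopen_dist_iff_openin mclosed_dist_iff_closedin .
  have "\<forall>a\<in>F. \<exists>Z k. closedin (top_of_set X) Z \<and> Z \<noteq> {} \<and> Z \<subseteq> ball a r \<inter> X
      \<and> k \<ge> 1 \<and> (T ^^ k) ` Z \<subseteq> Z"
  proof
    fix a assume "a \<in> F"
    then have "openin (top_of_set X) (ball a r \<inter> X) \<and> ball a r \<inter> X \<noteq> {}"
      using openin_ball_Int_nonempty[of a X r] F(3,4) by auto
    then show "\<exists>Z k. closedin (top_of_set X) Z \<and> Z \<noteq> {} \<and> Z \<subseteq> ball a r \<inter> X
        \<and> k \<ge> 1 \<and> (T ^^ k) ` Z \<subseteq> Z"
      using small by blast
  qed
  from bchoice[OF this] obtain Z where "\<forall>a\<in>F. \<exists>k. closedin (top_of_set X) (Z a) \<and> Z a \<noteq> {}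
      \<and> Z a \<subseteq> ball a r \<inter> X \<and> k \<ge> 1 \<and> (T ^^ k) ` Z a \<subseteq> Z a"
    by blast
  from bchoice[OF this] obtain k where Z: "\<forall>a\<in>F. closedin (top_of_set X) (Z a) \<and> Z a \<noteq> {}
      \<and> Z a \<subseteq> ball a r \<inter> X \<and> k a \<ge> 1 \<and> (T ^^ k a) ` Z a \<subseteq> Z a"
    by blast
  define K where "K = prod k F"
  have "\<forall>a\<in>F. \<exists>W. W \<subseteq> Z a \<and> W \<noteq> {} \<and> compact W \<and> (T ^^ K) ` W = W"
  proof
    fix a assume a: "a \<in> F"
    note Za = bspec[OF Z a]
    have "K = k a * prod k (F - {a})" unfolding K_def using a F(1) by (simp add: prod.remove)
    then have invariant: "(T ^^ K) ` Z a \<subseteq> Z a"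
      using funpow_image_subset[of "T ^^ k a" "Z a"] Za by (simp add: funpow_mult)
    have compact: "compact (Z a)"
      using Za closedin_compact[OF assms(1)] by blast
    have continuous: "continuous_on (Z a) (T ^^ K)"
      using Za continuous_on_subset[OF continuous_on_funpow[OF assms(2,3)]] by blast
    have nonempty: "Z a \<noteq> {}" using Za by blast
    obtain W where "W \<subseteq> Z a" "W \<noteq> {}" "compact W" "(T ^^ K) ` W = W"
      by (rule compact_forward_invariant_contains_invariant[OF compact nonempty continuous invariant])
    then show "\<exists>W. W \<subseteq> Z a \<and> W \<noteq> {} \<and> compact W \<and> (T ^^ K) ` W = W" by blast
  qed
  from bchoice[OF this] obtain W where W: "\<forall>a\<in>F. W a \<subseteq> Z a \<and> W a \<noteq> {} \<and> compact (W a) \<and> (T ^^ K) ` W a = W a"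
    by blast
  have "(\<Union>a\<in>F. W a) \<in> \<U>"
  proof (rule union_in)
    fix a assume a: "a \<in> F"
    then show "W a \<noteq> {} \<and> closed (W a) \<and> W a \<subseteq> ball a r \<inter> X"
      using bspec[OF W a] bspec[OF Z a] compact_imp_closed by blast
  qed
  moreover have "(induced_map T ^^ K) (\<Union>a\<in>F. W a) = (\<Union>a\<in>F. W a)"
    using W by (simp add: induced_map_funpow image_UN)
  moreover have "K \<ge> 1" unfolding K_def using Z by (intro prod_ge_1) blast
  moreover have "\<U> \<subseteq> hyperspace X" using assms(5) by (simp add: mopen_def)
  ultimately show ?thesis unfolding periodic_point_def by blast
qed

theorem mainTheorem2:
  fixes X :: "'a::metric_space set" and T :: "'a \<Rightarrow> 'a"
  assumes "compact X" and "infinite X"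
    and "continuous_on X T" and "T ` X \<subseteq> X"
  shows "exactly_devaney_chaotic hausdorff_dist (hyperspace X) (induced_map T)
     \<longleftrightarrow> topologically_exact dist X T \<and> HY_system dist X T"
proof
  assume chaotic: "exactly_devaney_chaotic hausdorff_dist (hyperspace X) (induced_map T)"
  then have exact: "topologically_exact dist X T"
    using topologically_exact_of_hyperspace[OF assms(1,4)] by (simp add: exactly_devaney_chaotic_def)
  moreover have "totally_transitive dist X T"
    \<comment> \<open>infiniteness of X is only used to know that X is non-empty\<close>
    using topologically_exact_imp_totally_transitive[OF exact assms(4)] assms(2) by auto
  moreover have "dense_small_periodic_sets dist X T"
    using chaotic dense_small_periodic_sets_of_hyperspace[OF assms(1)]
    by (simp add: exactly_devaney_chaotic_def)
  ultimately show "topologically_exact dist X T \<and> HY_system dist X T"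
    by (simp add: HY_system_def)
next
  assume "topologically_exact dist X T \<and> HY_system dist X T"
  then show "exactly_devaney_chaotic hausdorff_dist (hyperspace X) (induced_map T)"
    unfolding exactly_devaney_chaotic_def HY_system_def
    using topologically_exact_hyperspace periodic_points_dense_hyperspace assms(1,3,4) by blast
qed

end
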